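(* Let $\mathbb{G}$ be a Hausdorff topological group, and suppose that either (i) the action $\mathbb{G}\times\mathcal{C}\mathbb{G}\to\mathcal{C}\mathbb{G}$, $(h,[g,t])\mapsto[hg,t]$, on the quotient-topologized cone is discontinuous, or (ii) on $\mathbb{G}\times\mathcal{C}\mathbb{G}$ the quotient topology induced by $\mathbb{G}\times\mathbb{G}\times[0,1]\to\mathbb{G}\times\mathcal{C}\mathbb{G}$ differs from the product topology. Then the diagonal right translation action of $\mathbb{G}$ on the quotient-topologized join $\mathbb{G}*\mathbb{G}$ is discontinuous, and hence so is the diagonal right translation action of $\mathbb{G}$ on $E_n\mathbb{G}$ for every $1\le n\le\infty$.
   Context: The join $X*Y:=X\times Y\times[0,1]/\sim$ with $(x,y,0)\sim(x,y',0)$, $(x,y,1)\sim(x',y,1)$, points written $tx+(1-t)y$; more generally $E_n\mathbb{G}:=\mathbb{G}^{*(n+1)}$ is the set of formal convex combinations $\sum_{i=0}^n t_ig_i$ ($t_i\ge0$, $\sum t_i=1$, with $g_i$ irrelevant when $t_i=0$), topologized as a quotient of $\mathbb{G}^{n+1}\times\Delta^n$ ($\Delta^n$ the $n$-simplex), and $E_\infty\mathbb{G}=E\mathbb{G}:=\bigcup_n E_n\mathbb{G}$ carries the colimit topology. The cone is $\mathcal{C}\mathbb{G}:=\mathbb{G}\times[0,1]/(\mathbb{G}\times\{0\})$ with the quotient topology. $\mathbb{G}$ acts on $E_n\mathbb{G}$ on the right diagonally: $(\sum t_ig_i)g=\sum t_i(g_ig)$; continuity refers to the map $E_n\mathbb{G}\times\mathbb{G}\to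 E_n\mathbb{G}$ with the product topology on the domain. *)

theory Defs
  imports "HOL-Analysis.Analysis" "HOL-Algebra.Group"
begin

definition topological_group :: "('g, 'b) monoid_scheme \<Rightarrow> 'g topology \<Rightarrow> bool" where
  "topological_group G T \<longleftrightarrow> group G \<and> topspace T = carrier G \<and>
     continuous_map (prod_topology T T) T (\<lambda>(x, y). x \<otimes>\<^bsub>G\<^esub> y) \<and>
     continuous_map T T (\<lambda>x. inv\<^bsub>G\<^esub> x)"

definition quot_top :: "'a topology \<Rightarrow> ('a \<Rightarrow> 'b) \<Rightarrow> 'b topology" where
  "quot_top X f = topology (\<lambda>U. U \<subseteq> f ` topspace X \<and> openin X {x \<in> topspace X. f x \<in> U})"

lemma istopology_quot_top:
  "istopology (\<lambda>U. U \<subseteq> f ` topspace X \<and> openin X {x \<in> topspace X. f x \<in> U})"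
proof -
  have i: "{x \<in> topspace X. f x \<in> S \<inter> T} = {x \<in> topspace X. f x \<in> S} \<inter> {x \<in> topspace X. f x \<in> T}"
    for S T by auto
  have u: "{x \<in> topspace X. f x \<in> \<Union>K} = (\<Union>S\<in>K. {x \<in> topspace X. f x \<in> S})" for K by auto
  show ?thesis unfolding istopology_def i u by auto
qed

lemma openin_quot_top:
  "openin (quot_top X f) U \<longleftrightarrow> U \<subseteq> f ` topspace X \<and> openin X {x \<in> topspace X. f x \<in> U}"
  unfolding quot_top_def by (simp add: topology_inverse'[OF istopology_quot_top])

definition unit_interval :: "real topology" where
  "unit_interval = subtopology euclideanreal {0..1}"

text \<open>A cone point [g,t] is represented canonically by (t, Some g) for t > 0 and (0, None)
  for the apex t = 0.\<close>
definition cone_pt :: "'g \<Rightarrow> real \<Rightarrow> real \<times> 'g option" where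
  "cone_pt g t = (t, if t = 0 then None else Some g)"

definition cone_top :: "'g topology \<Rightarrow> (real \<times> 'g option) topology" where
  "cone_top T = quot_top (prod_topology T unit_interval) (\<lambda>(g, t). cone_pt g t)"

text \<open>A join point t x + (1-t) y is represented canonically by
  (t, x if t > 0, y if t < 1).\<close>
definition join_pt :: "'g \<Rightarrow> 'g \<Rightarrow> real \<Rightarrow> real \<times> 'g option \<times> 'g option" where
  "join_pt x y t = (t, if t = 0 then None else Some x, if t = 1 then None else Some y)"

definition join_top :: "'g topology \<Rightarrow> (real \<times> 'g option \<times> 'g option) topology" where
  "join_top T = quot_top (prod_topology T (prod_topology T unit_interval)) (\<lambda>(x, y, t). join_pt x y t)"

definition join_ract :: "('g, 'b) monoid_scheme \<Rightarrow> (real \<times> 'g option \<times> 'g option) \<Rightarrow> 'g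
    \<Rightarrow> real \<times> 'g option \<times> 'g option" where
  "join_ract G p g = (fst p, map_option (\<lambda>a. a \<otimes>\<^bsub>G\<^esub> g) (fst (snd p)),
                             map_option (\<lambda>a. a \<otimes>\<^bsub>G\<^esub> g) (snd (snd p)))"

text \<open>Formal convex combinations sum_{i=0}^n t_i g_i, represented canonically as functions
  i \<mapsto> (t_i, Some g_i if t_i > 0, None if t_i = 0), with (0, None) for i > n.\<close>
definition simplex_top :: "nat \<Rightarrow> (nat \<Rightarrow> real) topology" where
  "simplex_top n = subtopology (product_topology (\<lambda>_. euclideanreal) {..n})
      {t. (\<forall>i\<le>n. 0 \<le> t i) \<and> sum t {..n} = 1}"

definition En_pt :: "nat \<Rightarrow> (nat \<Rightarrow> 'g) \<Rightarrow> (nat \<Rightarrow> real) \<Rightarrow> nat \<Rightarrow> real \<times> 'g option" where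
  "En_pt n g t = (\<lambda>i. if i \<le> n then (t i, if t i = 0 then None else Some (g i)) else (0, None))"

definition En_top :: "'g topology \<Rightarrow> nat \<Rightarrow> (nat \<Rightarrow> real \<times> 'g option) topology" where
  "En_top T n = quot_top (prod_topology (product_topology (\<lambda>_. T) {..n}) (simplex_top n))
                         (\<lambda>(g, t). En_pt n g t)"

text \<open>E_infinity: the union of the E_n (nested via the canonical representation) with the
  colimit topology.\<close>
definition Einf_top :: "'g topology \<Rightarrow> (nat \<Rightarrow> real \<times> 'g option) topology" where
  "Einf_top T = topology (\<lambda>U. U \<subseteq> (\<Union>n. topspace (En_top T n)) \<and>
                             (\<forall>n. openin (En_top T n) (U \<inter> topspace (En_top T n))))"

definition En_ract :: "('g, 'b) monoid_scheme \<Rightarrow> (nat \<Rightarrow> real \<times> 'g option) \<Rightarrow> 'g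
    \<Rightarrow> nat \<Rightarrow> real \<times> 'g option" where
  "En_ract G p g = (\<lambda>i. (fst (p i), map_option (\<lambda>a. a \<otimes>\<^bsub>G\<^esub> g) (snd (p i))))"

end

theory Submission
  imports Defs
begin

(* Embed the cone into G * G by \<iota>[g, t] = (t/3) g + (1 - t/3) 1; translating by h gives
   (t/3) gh + (1 - t/3) h, from which (h, [g, t]) is recovered by the decoding map
   s x + (1 - s) y \<mapsto> (y, [x y^-1, min 1 (3 s)]) on the open region s < 1/2.  Lifted to
   G \<times> G \<times> [0,1] the decoding is continuous, so for every U \<subseteq> G \<times> CG with open preimage in
   G \<times> G \<times> [0,1] the set V of points of the region that decode into U is open in G * G, and U is
   the preimage of V under (h, c) \<mapsto> \<iota>(c) h.  If the action on G * G were continuous, this map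
   would be continuous for the product topology on G \<times> CG; so the quotient topology on G \<times> CG
   would be the product topology, and the cone action, continuous for the quotient topology,
   would be continuous.  The same works for E_n G (n \<ge> 1) using the vertices 0 and 1, and for
   E_\<infinity> G through E_1 G. *)

lemma topspace_quot_top: "topspace (quot_top X f) = f ` topspace X"
proof
  show "topspace (quot_top X f) \<subseteq> f ` topspace X"
    using openin_topspace[of "quot_top X f"] unfolding openin_quot_top by (rule conjunct1)
  have "{x \<in> topspace X. f x \<in> f ` topspace X} = topspace X"
    by auto
  then have "openin (quot_top X f) (f ` topspace X)"
    unfolding openin_quot_top by simp
  then show "f ` topspace X \<subseteq> topspace (quot_top X f)"
    by (rule openin_subset)
qed

lemma continuous_map_quot_top: "continuous_map X (quot_top X f) f"
  unfolding continuous_map_def by (auto simp: topspace_quot_top openin_quot_top)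

lemma continuous_map_from_quot_top:
  assumes "continuous_map X Y (\<lambda>x. h (f x))"
  shows "continuous_map (quot_top X f) Y h"
  unfolding continuous_map_def
proof (intro conjI allI impI)
  show "h \<in> topspace (quot_top X f) \<rightarrow> topspace Y"
    using assms by (auto simp: topspace_quot_top continuous_map_def)
  fix W assume "openin Y W"
  have "{x \<in> topspace X. f x \<in> {z \<in> topspace (quot_top X f). h z \<in> W}} = {x \<in> topspace X. h (f x) \<in> W}"
    by (auto simp: topspace_quot_top)
  with openin_continuous_map_preimage[OF assms \<open>openin Y W\<close>]
  show "openin (quot_top X f) {z \<in> topspace (quot_top X f). h z \<in> W}"
    unfolding openin_quot_top by (auto simp: topspace_quot_top)
qed

lemma quot_top_eqI:
  assumes f: "continuous_map X Y f" and surj: "f ` topspace X = topspace Y"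
    and preimage_open: "\<And>U. U \<subseteq> topspace Y \<Longrightarrow> openin X {x \<in> topspace X. f x \<in> U} \<Longrightarrow> openin Y U"
  shows "quot_top X f = Y"
  unfolding topology_eq openin_quot_top surj
proof (intro allI iffI conjI)
  fix U assume "U \<subseteq> topspace Y \<and> openin X {x \<in> topspace X. f x \<in> U}"
  then show "openin Y U" using preimage_open by blast
next
  fix U assume "openin Y U"
  then show "U \<subseteq> topspace Y" by (rule openin_subset)
  show "openin X {x \<in> topspace X. f x \<in> U}"
    using f \<open>openin Y U\<close> by (rule openin_continuous_map_preimage)
qed

lemma
  assumes "topological_group G T"
  shows topological_group_group: "group G"
    and topspace_topological_group: "topspace T = carrier G"
  using assms by (auto simp: topological_group_def)

lemma continuous_map_tg_mult:
  assumes "topological_group G T" "continuous_map Z T f" "continuous_map Z T g"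
  shows "continuous_map Z T (\<lambda>x. f x \<otimes>\<^bsub>G\<^esub> g x)"
proof -
  have "continuous_map (prod_topology T T) T (\<lambda>(x, y). x \<otimes>\<^bsub>G\<^esub> y)"
    using assms(1) by (simp add: topological_group_def)
  from continuous_map_compose[OF continuous_map_pairedI[OF assms(2,3)] this]
  show ?thesis by (simp add: o_def)
qed

lemma continuous_map_tg_inv:
  assumes "topological_group G T" "continuous_map Z T f"
  shows "continuous_map Z T (\<lambda>x. inv\<^bsub>G\<^esub> (f x))"
proof -
  have "continuous_map T T (\<lambda>x. inv\<^bsub>G\<^esub> x)"
    using assms(1) by (simp add: topological_group_def)
  from continuous_map_compose[OF assms(2) this]
  show ?thesis by (simp add: o_def)
qed

lemma topspace_unit_interval [simp]: "topspace unit_interval = {0..1}"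
  by (simp add: unit_interval_def)

lemma continuous_map_into_unit_interval:
  "continuous_map Z unit_interval f \<longleftrightarrow> continuous_map Z euclideanreal f \<and> f \<in> topspace Z \<rightarrow> {0..1}"
  by (simp add: unit_interval_def continuous_map_in_subtopology)

lemma continuous_map_snd_unit_interval:
  "continuous_map (prod_topology X unit_interval) euclideanreal snd"
  using continuous_map_snd[of X unit_interval] by (simp add: continuous_map_into_unit_interval)

abbreviation cone_prod_map :: "'g \<times> 'g \<times> real \<Rightarrow> 'g \<times> real \<times> 'g option" where
  "cone_prod_map \<equiv> \<lambda>(h, g, t). (h, cone_pt g t)"

lemma topspace_cone_top: "topspace (cone_top T) = (\<lambda>(g, t). cone_pt g t) ` (topspace T \<times> {0..1})"
  unfolding cone_top_def topspace_quot_top by simp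

lemma continuous_map_cone_pt:
  "continuous_map (prod_topology T unit_interval) (cone_top T) (\<lambda>(g, t). cone_pt g t)"
  unfolding cone_top_def by (rule continuous_map_quot_top)

lemma continuous_map_cone_prod_map:
  "continuous_map (prod_topology T (prod_topology T unit_interval)) (prod_topology T (cone_top T)) cone_prod_map"
proof -
  have "continuous_map (prod_topology T (prod_topology T unit_interval)) (prod_topology T (cone_top T))
          (\<lambda>x. (fst x, (\<lambda>(g, t). cone_pt g t) (snd x)))"
    by (intro continuous_map_pairedI continuous_map_fst
          continuous_map_compose[OF continuous_map_snd continuous_map_cone_pt, unfolded o_def])
  then show ?thesis by (simp add: case_prod_unfold)
qed

lemma image_cone_prod_map:
  "cone_prod_map ` topspace (prod_topology T (prod_topology T unit_interval)) = topspace (prod_topology T (cone_top T))"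
  by (force simp: topspace_cone_top)

lemma continuous_map_cone_action_if_quot_top_eq:
  assumes tg: "topological_group G T"
    and eq: "quot_top (prod_topology T (prod_topology T unit_interval)) cone_prod_map = prod_topology T (cone_top T)"
  shows "continuous_map (prod_topology T (cone_top T)) (cone_top T)
           (\<lambda>(h, (t, a)). (t, map_option (\<lambda>g. h \<otimes>\<^bsub>G\<^esub> g) a))"
  unfolding eq[symmetric]
proof (rule continuous_map_from_quot_top)
  let ?X = "prod_topology T (prod_topology T unit_interval)"
  have "continuous_map ?X (prod_topology T unit_interval) (\<lambda>x. (fst x \<otimes>\<^bsub>G\<^esub> fst (snd x), snd (snd x)))"
    by (intro continuous_map_pairedI continuous_map_tg_mult[OF tg] continuous_map_fst
          continuous_map_compose[OF continuous_map_snd continuous_map_fst, unfolded o_def]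
          continuous_map_compose[OF continuous_map_snd continuous_map_snd, unfolded o_def])
  from continuous_map_compose[OF this continuous_map_cone_pt]
  show "continuous_map ?X (cone_top T) (\<lambda>x. (\<lambda>(h, (t, a)). (t, map_option (\<lambda>g. h \<otimes>\<^bsub>G\<^esub> g) a)) (cone_prod_map x))"
    by (rule continuous_map_eq) (simp add: case_prod_unfold cone_pt_def)
qed

lemma openin_prod_cone_top_if_decodable:
  assumes act: "continuous_map (prod_topology Z T) Z (\<lambda>(p, g). A p g)"
    and emb: "continuous_map (cone_top T) Z \<iota>"
    and V: "openin Z {z \<in> topspace Z. z \<in> S \<and> dec z \<in> U}"
    and decode: "\<And>c h. c \<in> topspace (cone_top T) \<Longrightarrow> h \<in> topspace T \<Longrightarrow>
                   A (\<iota> c) h \<in> S \<and> dec (A (\<iota> c) h) = (h, c)"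
    and U: "U \<subseteq> topspace (prod_topology T (cone_top T))"
  shows "openin (prod_topology T (cone_top T)) U"
proof -
  let ?\<Phi> = "\<lambda>(h, c). A (\<iota> c) h"
  have "continuous_map (prod_topology T (cone_top T)) (prod_topology Z T) (\<lambda>(h, c). (\<iota> c, h))"
    by (simp add: case_prod_unfold continuous_map_pairedI continuous_map_fst continuous_map_snd
          continuous_map_compose[OF continuous_map_snd emb, unfolded o_def])
  from continuous_map_compose[OF this act]
  have \<Phi>: "continuous_map (prod_topology T (cone_top T)) Z ?\<Phi>"
    by (simp add: o_def case_prod_unfold)
  have "{y \<in> topspace (prod_topology T (cone_top T)). ?\<Phi> y \<in> {z \<in> topspace Z. z \<in> S \<and> dec z \<in> U}} = U"
  proof (intro equalityI subsetI)
    fix y assume "y \<in> {y \<in> topspace (prod_topology T (cone_top T)). ?\<Phi> y \<in> {z \<in> topspace Z. z \<in> S \<and> dec z \<in> U}}"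
    then obtain h c where "y = (h, c)" "h \<in> topspace T" "c \<in> topspace (cone_top T)" "dec (A (\<iota> c) h) \<in> U"
      by auto
    with decode show "y \<in> U" by simp
  next
    fix y assume "y \<in> U"
    with U obtain h c where y: "y = (h, c)" "h \<in> topspace T" "c \<in> topspace (cone_top T)"
      by auto
    have "A (\<iota> c) h \<in> topspace Z"
      using funcset_mem[OF continuous_map_funspace[OF \<Phi>], of "(h, c)"] y by simp
    with decode[OF y(3,2)] y \<open>y \<in> U\<close>
    show "y \<in> {y \<in> topspace (prod_topology T (cone_top T)). ?\<Phi> y \<in> {z \<in> topspace Z. z \<in> S \<and> dec z \<in> U}}"
      by simp
  qed
  with openin_continuous_map_preimage[OF \<Phi> V] show ?thesis by simp
qed

lemma quot_top_eq_prod_cone_top_if_decodable: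
  assumes act: "continuous_map (prod_topology Z T) Z (\<lambda>(p, g). A p g)"
    and emb: "continuous_map (cone_top T) Z \<iota>"
    and decode: "\<And>c h. c \<in> topspace (cone_top T) \<Longrightarrow> h \<in> topspace T \<Longrightarrow>
                   A (\<iota> c) h \<in> S \<and> dec (A (\<iota> c) h) = (h, c)"
    and V: "\<And>U. openin (prod_topology T (prod_topology T unit_interval))
                   {x \<in> topspace (prod_topology T (prod_topology T unit_interval)). cone_prod_map x \<in> U}
                 \<Longrightarrow> openin Z {z \<in> topspace Z. z \<in> S \<and> dec z \<in> U}"
  shows "quot_top (prod_topology T (prod_topology T unit_interval)) cone_prod_map = prod_topology T (cone_top T)"
  using continuous_map_cone_prod_map image_cone_prod_map
proof (rule quot_top_eqI)
  show "openin (prod_topology T (cone_top T)) U"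
    if "U \<subseteq> topspace (prod_topology T (cone_top T))"
      and "openin (prod_topology T (prod_topology T unit_interval))
             {x \<in> topspace (prod_topology T (prod_topology T unit_interval)). cone_prod_map x \<in> U}" for U
    using act emb V[OF that(2)] decode that(1) by (rule openin_prod_cone_top_if_decodable)
qed

lemma openin_quot_top_decode:
  assumes F: "continuous_map (subtopology Y R) X F" and R: "openin Y R"
    and W: "openin X {x \<in> topspace X. q x \<in> U}"
    and region: "\<And>y. y \<in> topspace Y \<Longrightarrow> p y \<in> S \<longleftrightarrow> y \<in> R"
    and decode: "\<And>y. y \<in> topspace Y \<Longrightarrow> y \<in> R \<Longrightarrow> dec (p y) = q (F y)"
  shows "openin (quot_top Y p) {z \<in> topspace (quot_top Y p). z \<in> S \<and> dec z \<in> U}"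
proof -
  have "openin (subtopology Y R) {y \<in> topspace (subtopology Y R). F y \<in> {x \<in> topspace X. q x \<in> U}}"
    using F W by (rule openin_continuous_map_preimage)
  then have "openin Y {y \<in> topspace (subtopology Y R). F y \<in> {x \<in> topspace X. q x \<in> U}}"
    using R by (rule openin_trans_full)
  moreover have "{y \<in> topspace (subtopology Y R). F y \<in> {x \<in> topspace X. q x \<in> U}}
      = {y \<in> topspace Y. p y \<in> {z \<in> topspace (quot_top Y p). z \<in> S \<and> dec z \<in> U}}"
  proof -
    have "{y \<in> topspace Y. p y \<in> {z \<in> topspace (quot_top Y p). z \<in> S \<and> dec z \<in> U}}
        = {y \<in> topspace Y. p y \<in> S \<and> dec (p y) \<in> U}"
      by (auto simp: topspace_quot_top)
    with region decode continuous_map_funspace[OF F] show ?thesis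
      by auto
  qed
  ultimately show ?thesis
    unfolding openin_quot_top by (auto simp: topspace_quot_top)
qed

definition cone_decode :: "('g, 'b) monoid_scheme \<Rightarrow> 'g \<Rightarrow> 'g \<Rightarrow> real \<Rightarrow> 'g \<times> 'g \<times> real" where
  "cone_decode G x y s = (y, x \<otimes>\<^bsub>G\<^esub> inv\<^bsub>G\<^esub> y, min 1 (3 * s))"

lemma cone_decode_translate:
  assumes "group G" "g \<in> carrier G" "h \<in> carrier G" "t \<le> 1"
  shows "cone_decode G (g \<otimes>\<^bsub>G\<^esub> h) h (t / 3) = (h, g, t)"
proof -
  interpret group G by fact
  show ?thesis using assms by (simp add: cone_decode_def m_assoc)
qed

lemma continuous_map_cone_decode:
  assumes tg: "topological_group G T"
    and x: "continuous_map Z T x" and y: "continuous_map Z T y"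
    and s: "continuous_map Z euclideanreal s" and s_nonneg: "\<And>z. z \<in> topspace Z \<Longrightarrow> 0 \<le> s z"
  shows "continuous_map Z (prod_topology T (prod_topology T unit_interval)) (\<lambda>z. cone_decode G (x z) (y z) (s z))"
proof -
  have "continuous_map Z unit_interval (\<lambda>z. min 1 (3 * s z))"
    unfolding continuous_map_into_unit_interval
    using s_nonneg by (auto intro!: continuous_map_real_min continuous_map_real_mult s)
  then show ?thesis
    unfolding cone_decode_def
    by (intro continuous_map_pairedI y continuous_map_tg_mult[OF tg] continuous_map_tg_inv[OF tg] x)
qed

(* At the apex c = (0, None) the vertex the (snd c) is junk, but it gets weight 0. *)
definition cone_into_join :: "('g, 'b) monoid_scheme \<Rightarrow> real \<times> 'g option \<Rightarrow> real \<times> 'g option \<times> 'g option" where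
  "cone_into_join G c = join_pt (the (snd c)) \<one>\<^bsub>G\<^esub> (fst c / 3)"

definition join_decode :: "('g, 'b) monoid_scheme \<Rightarrow> real \<times> 'g option \<times> 'g option \<Rightarrow> 'g \<times> real \<times> 'g option" where
  "join_decode G p = cone_prod_map (cone_decode G (the (fst (snd p))) (the (snd (snd p))) (fst p))"

lemma cone_into_join_cone_pt: "cone_into_join G (cone_pt g t) = join_pt g \<one>\<^bsub>G\<^esub> (t / 3)"
  by (simp add: cone_into_join_def cone_pt_def join_pt_def)

lemma fst_join_pt [simp]: "fst (join_pt x y s) = s"
  by (simp add: join_pt_def)

lemma join_ract_join_pt: "join_ract G (join_pt x y s) h = join_pt (x \<otimes>\<^bsub>G\<^esub> h) (y \<otimes>\<^bsub>G\<^esub> h) s"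
  by (simp add: join_ract_def join_pt_def)

lemma join_decode_join_pt:
  "s < 1 \<Longrightarrow> join_decode G (join_pt x y s) = cone_prod_map (cone_decode G x y s)"
  by (simp add: join_decode_def join_pt_def cone_decode_def cone_pt_def)

lemma continuous_map_join_pt:
  "continuous_map (prod_topology T (prod_topology T unit_interval)) (join_top T) (\<lambda>(x, y, t). join_pt x y t)"
  unfolding join_top_def by (rule continuous_map_quot_top)

lemma continuous_map_cone_into_join:
  assumes tg: "topological_group G T"
  shows "continuous_map (cone_top T) (join_top T) (cone_into_join G)"
  unfolding cone_top_def
proof (rule continuous_map_from_quot_top)
  let ?Y = "prod_topology T unit_interval"
  interpret group G by (rule topological_group_group[OF tg])
  have "\<one>\<^bsub>G\<^esub> \<in> topspace T"
    by (simp add: topspace_topological_group[OF tg])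
  moreover have "continuous_map ?Y unit_interval (\<lambda>x. snd x / 3)"
    unfolding continuous_map_into_unit_interval
    by (auto intro!: continuous_map_real_divide continuous_map_snd_unit_interval)
  ultimately have "continuous_map ?Y (prod_topology T (prod_topology T unit_interval)) (\<lambda>x. (fst x, \<one>\<^bsub>G\<^esub>, snd x / 3))"
    by (intro continuous_map_pairedI continuous_map_fst) simp_all
  from continuous_map_compose[OF this continuous_map_join_pt]
  show "continuous_map ?Y (join_top T) (\<lambda>x. cone_into_join G ((\<lambda>(g, t). cone_pt g t) x))"
    by (rule continuous_map_eq) (simp add: case_prod_unfold cone_into_join_cone_pt)
qed

lemma openin_join_decode:
  assumes tg: "topological_group G T"
    and W: "openin (prod_topology T (prod_topology T unit_interval))
              {x \<in> topspace (prod_topology T (prod_topology T unit_interval)). cone_prod_map x \<in> U}"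
  shows "openin (join_top T) {p \<in> topspace (join_top T). p \<in> {p. fst p < 1/2} \<and> join_decode G p \<in> U}"
proof -
  let ?Y = "prod_topology T (prod_topology T unit_interval)"
  let ?R = "{y \<in> topspace ?Y. snd (snd y) \<in> {..<1/2}}"
  have s: "continuous_map ?Y euclideanreal (\<lambda>y. snd (snd y))"
    using continuous_map_compose[OF continuous_map_snd continuous_map_snd_unit_interval] by (simp add: o_def)
  have "continuous_map ?Y T (\<lambda>y. fst (snd y))"
    using continuous_map_compose[OF continuous_map_snd continuous_map_fst] by (simp add: o_def)
  then have "continuous_map ?Y ?Y (\<lambda>y. cone_decode G (fst y) (fst (snd y)) (snd (snd y)))"
    by (rule continuous_map_cone_decode[OF tg continuous_map_fst _ s]) auto
  then have F: "continuous_map ?Y ?Y (\<lambda>(x, y, s). cone_decode G x y s)"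
    by (simp add: case_prod_unfold)
  show ?thesis
    unfolding join_top_def
  proof (rule openin_quot_top_decode[where R = ?R and q = cone_prod_map])
    show "continuous_map (subtopology ?Y ?R) ?Y (\<lambda>(x, y, s). cone_decode G x y s)"
      using F by (rule continuous_map_from_subtopology)
    show "openin ?Y ?R"
      using s by (rule openin_continuous_map_preimage) simp
  qed (use W in \<open>auto simp: join_decode_join_pt\<close>)
qed

lemma join_decode_join_ract_cone_into_join:
  assumes tg: "topological_group G T"
    and c: "c \<in> topspace (cone_top T)" and h: "h \<in> topspace T"
  shows "join_ract G (cone_into_join G c) h \<in> {p. fst p < 1/2}
      \<and> join_decode G (join_ract G (cone_into_join G c) h) = (h, c)"
proof -
  interpret group G by (rule topological_group_group[OF tg])
  from c obtain g t where c: "c = cone_pt g t" and g: "g \<in> carrier G" and t: "0 \<le> t" "t \<le> 1"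
    by (auto simp: topspace_cone_top topspace_topological_group[OF tg])
  have "join_ract G (cone_into_join G c) h = join_pt (g \<otimes>\<^bsub>G\<^esub> h) h (t / 3)"
    using h by (simp add: c cone_into_join_cone_pt join_ract_join_pt topspace_topological_group[OF tg])
  with t h g show ?thesis
    by (simp add: join_decode_join_pt cone_decode_translate c topspace_topological_group[OF tg] is_group)
qed

lemma quot_top_eq_prod_cone_top_if_join_action_continuous:
  assumes tg: "topological_group G T"
    and cont: "continuous_map (prod_topology (join_top T) T) (join_top T) (\<lambda>(p, g). join_ract G p g)"
  shows "quot_top (prod_topology T (prod_topology T unit_interval)) cone_prod_map = prod_topology T (cone_top T)"
  using cont continuous_map_cone_into_join[OF tg] join_decode_join_ract_cone_into_join[OF tg]
    openin_join_decode[OF tg]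
  by (rule quot_top_eq_prod_cone_top_if_decodable)

lemma sum_atMost_two_points:
  fixes n :: nat
  assumes "1 \<le> n"
  shows "(\<Sum>i\<le>n. if i = 0 then a else if i = 1 then b else 0) = a + (b :: 'a :: comm_monoid_add)"
  using assms
proof (induction n rule: dec_induct)
  case base
  have "{..1::nat} = {0, 1}" by auto
  then show ?case by simp
qed simp

lemma topspace_simplex_top:
  "topspace (simplex_top n) = (\<Pi>\<^sub>E i\<in>{..n}. UNIV) \<inter> {t. (\<forall>i\<le>n. 0 \<le> t i) \<and> sum t {..n} = 1}"
  by (simp add: simplex_top_def)

lemma continuous_map_simplex_top_coordinate:
  "k \<le> n \<Longrightarrow> continuous_map (simplex_top n) euclideanreal (\<lambda>t. t k)"
  unfolding simplex_top_def
  by (rule continuous_map_from_subtopology)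
    (use continuous_map_product_projection[of k "{..n}" "\<lambda>_. euclideanreal"] in simp)

lemma continuous_map_En_pt:
  "continuous_map (prod_topology (product_topology (\<lambda>_. T) {..n}) (simplex_top n)) (En_top T n)
     (\<lambda>(g, t). En_pt n g t)"
  unfolding En_top_def by (rule continuous_map_quot_top)

lemma En_ract_En_pt: "En_ract G (En_pt n g t) h = En_pt n (\<lambda>i. g i \<otimes>\<^bsub>G\<^esub> h) t"
  by (auto simp: En_ract_def En_pt_def fun_eq_iff)

lemma fst_En_pt: "fst (En_pt n g t i) = (if i \<le> n then t i else 0)"
  by (simp add: En_pt_def)

definition cone_into_En :: "('g, 'b) monoid_scheme \<Rightarrow> nat \<Rightarrow> real \<times> 'g option \<Rightarrow> nat \<Rightarrow> real \<times> 'g option" where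
  "cone_into_En G n c = En_pt n (\<lambda>i\<in>{..n}. if i = 0 then the (snd c) else \<one>\<^bsub>G\<^esub>)
     (\<lambda>i\<in>{..n}. if i = 0 then fst c / 3 else if i = 1 then 1 - fst c / 3 else 0)"

definition En_decode :: "('g, 'b) monoid_scheme \<Rightarrow> (nat \<Rightarrow> real \<times> 'g option) \<Rightarrow> 'g \<times> real \<times> 'g option" where
  "En_decode G p = cone_prod_map (cone_decode G (the (snd (p 0))) (the (snd (p 1))) (fst (p 0)))"

lemma cone_into_En_cone_pt:
  "cone_into_En G n (cone_pt g t) = En_pt n (\<lambda>i\<in>{..n}. if i = 0 then g else \<one>\<^bsub>G\<^esub>)
     (\<lambda>i\<in>{..n}. if i = 0 then t / 3 else if i = 1 then 1 - t / 3 else 0)"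
  by (auto simp: cone_into_En_def cone_pt_def En_pt_def fun_eq_iff)

lemma En_decode_En_pt:
  "1 \<le> n \<Longrightarrow> t 1 \<noteq> 0 \<Longrightarrow> En_decode G (En_pt n g t) = cone_prod_map (cone_decode G (g 0) (g 1) (t 0))"
  by (simp add: En_decode_def En_pt_def cone_decode_def cone_pt_def)

lemma continuous_map_cone_into_En:
  assumes tg: "topological_group G T" and n: "1 \<le> n"
  shows "continuous_map (cone_top T) (En_top T n) (cone_into_En G n)"
  unfolding cone_top_def
proof (rule continuous_map_from_quot_top)
  interpret group G by (rule topological_group_group[OF tg])
  let ?Y = "prod_topology T unit_interval"
  let ?w = "\<lambda>t i. if i = 0 then t / 3 else if i = 1 then 1 - t / 3 else (0::real)"
  have points: "continuous_map ?Y (product_topology (\<lambda>_. T) {..n}) (\<lambda>x. \<lambda>i\<in>{..n}. if i = 0 then fst x else \<one>\<^bsub>G\<^esub>)"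
    unfolding continuous_map_componentwise
    by (auto simp: topspace_topological_group[OF tg] continuous_map_fst)
  have "continuous_map ?Y euclideanreal (\<lambda>x. snd x / 3)"
    by (auto intro!: continuous_map_real_divide continuous_map_snd_unit_interval)
  then have w: "continuous_map ?Y euclideanreal (\<lambda>x. ?w (snd x) i)" for i
    by (auto intro: continuous_map_diff)
  have weights: "continuous_map ?Y (simplex_top n) (\<lambda>x. restrict (?w (snd x)) {..n})"
    unfolding simplex_top_def continuous_map_in_subtopology continuous_map_componentwise
  proof (intro conjI ballI)
    show "(\<lambda>x. restrict (?w (snd x)) {..n}) ` topspace ?Y \<subseteq> extensional {..n}"
      by auto
    show "continuous_map ?Y euclideanreal (\<lambda>x. restrict (?w (snd x)) {..n} k)" if "k \<in> {..n}" for k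
      using w[of k] that by simp
    have "(\<Sum>i\<le>n. restrict (?w t) {..n} i) = 1" for t
      using sum_atMost_two_points[OF n, of "t / 3" "1 - t / 3"] by simp
    then show "(\<lambda>x. restrict (?w (snd x)) {..n}) \<in> topspace ?Y \<rightarrow> {t. (\<forall>i\<le>n. 0 \<le> t i) \<and> sum t {..n} = 1}"
      by auto
  qed
  from continuous_map_compose[OF continuous_map_pairedI[OF points weights] continuous_map_En_pt]
  show "continuous_map ?Y (En_top T n) (\<lambda>x. cone_into_En G n ((\<lambda>(g, t). cone_pt g t) x))"
    by (rule continuous_map_eq) (simp add: case_prod_unfold cone_into_En_cone_pt)
qed

lemma openin_En_decode:
  assumes tg: "topological_group G T"
    and W: "openin (prod_topology T (prod_topology T unit_interval))
              {x \<in> topspace (prod_topology T (prod_topology T unit_interval)). cone_prod_map x \<in> U}"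
  shows "openin (En_top T m) {p \<in> topspace (En_top T m). p \<in> {p. 1/2 < fst (p 1)} \<and> En_decode G p \<in> U}"
proof -
  let ?Y = "prod_topology (product_topology (\<lambda>_. T) {..m}) (simplex_top m)"
  let ?R = "{y \<in> topspace ?Y. 1 \<le> m \<and> snd y 1 \<in> {1/2<..}}"
  let ?F = "\<lambda>(g, t). cone_decode G (g 0) (g 1) (t 0)"
  have "openin ?Y ?R \<and> continuous_map (subtopology ?Y ?R) (prod_topology T (prod_topology T unit_interval)) ?F"
  proof (cases "m = 0")
    case False
    then have m: "1 \<le> m" by simp
    have point: "continuous_map ?Y T (\<lambda>y. fst y k)" if "k \<le> m" for k
      using continuous_map_compose[OF continuous_map_fst continuous_map_product_projection[of k "{..m}" "\<lambda>_. T"]] that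
      by (simp add: o_def)
    have weight: "continuous_map ?Y euclideanreal (\<lambda>y. snd y k)" if "k \<le> m" for k
      using continuous_map_compose[OF continuous_map_snd continuous_map_simplex_top_coordinate[OF that]]
      by (simp add: o_def)
    have "openin ?Y ?R"
      using m openin_continuous_map_preimage[OF weight[OF m], of "{1/2<..}"] by simp
    moreover have "continuous_map ?Y (prod_topology T (prod_topology T unit_interval))
        (\<lambda>y. cone_decode G (fst y 0) (fst y 1) (snd y 0))"
      by (rule continuous_map_cone_decode[OF tg point point weight]) (use m in \<open>auto simp: topspace_simplex_top\<close>)
    ultimately show ?thesis
      by (simp add: case_prod_unfold continuous_map_from_subtopology)
  qed simp
  then show ?thesis
    unfolding En_top_def
    by (intro openin_quot_top_decode[where R = ?R and q = cone_prod_map])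
       (use W in \<open>auto simp: fst_En_pt En_decode_En_pt split: if_splits\<close>)
qed

lemma En_decode_En_ract_cone_into_En:
  assumes tg: "topological_group G T" and n: "1 \<le> n"
    and c: "c \<in> topspace (cone_top T)" and h: "h \<in> topspace T"
  shows "En_ract G (cone_into_En G n c) h \<in> {p. 1/2 < fst (p 1)}
      \<and> En_decode G (En_ract G (cone_into_En G n c) h) = (h, c)"
proof -
  interpret group G by (rule topological_group_group[OF tg])
  from c obtain g t where c: "c = cone_pt g t" and g: "g \<in> carrier G" and t: "0 \<le> t" "t \<le> 1"
    by (auto simp: topspace_cone_top topspace_topological_group[OF tg])
  let ?p = "En_ract G (cone_into_En G n c) h"
  have p: "?p = En_pt n (\<lambda>i. (\<lambda>i\<in>{..n}. if i = 0 then g else \<one>\<^bsub>G\<^esub>) i \<otimes>\<^bsub>G\<^esub> h)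
      (\<lambda>i\<in>{..n}. if i = 0 then t / 3 else if i = 1 then 1 - t / 3 else 0)"
    by (simp add: c cone_into_En_cone_pt En_ract_En_pt)
  have "1/2 < fst (?p 1)"
    unfolding p using n t by (simp add: fst_En_pt)
  moreover have "En_decode G ?p = (h, c)"
    unfolding p using n t g h
    by (simp add: En_decode_En_pt cone_decode_translate c topspace_topological_group[OF tg] is_group)
  ultimately show ?thesis by simp
qed

lemma quot_top_eq_prod_cone_top_if_En_action_continuous:
  assumes tg: "topological_group G T" and n: "1 \<le> n"
    and cont: "continuous_map (prod_topology (En_top T n) T) (En_top T n) (\<lambda>(p, g). En_ract G p g)"
  shows "quot_top (prod_topology T (prod_topology T unit_interval)) cone_prod_map = prod_topology T (cone_top T)"
  using cont continuous_map_cone_into_En[OF tg n] En_decode_En_ract_cone_into_En[OF tg n]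
    openin_En_decode[OF tg]
  by (rule quot_top_eq_prod_cone_top_if_decodable)

lemma istopology_Einf_top:
  "istopology (\<lambda>U. U \<subseteq> (\<Union>n. topspace (En_top T n)) \<and> (\<forall>n. openin (En_top T n) (U \<inter> topspace (En_top T n))))"
  unfolding istopology_def
proof (intro conjI allI impI ballI)
  fix S S' :: "(nat \<Rightarrow> real \<times> 'a option) set"
  assume S: "S \<subseteq> (\<Union>n. topspace (En_top T n)) \<and> (\<forall>n. openin (En_top T n) (S \<inter> topspace (En_top T n)))"
    and S': "S' \<subseteq> (\<Union>n. topspace (En_top T n)) \<and> (\<forall>n. openin (En_top T n) (S' \<inter> topspace (En_top T n)))"
  then show "S \<inter> S' \<subseteq> (\<Union>n. topspace (En_top T n))" by blast
  fix n
  have "S \<inter> S' \<inter> topspace (En_top T n) = (S \<inter> topspace (En_top T n)) \<inter> (S' \<inter> topspace (En_top T n))"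
    by blast
  with S S' show "openin (En_top T n) (S \<inter> S' \<inter> topspace (En_top T n))"
    by (simp add: openin_Int)
next
  fix K :: "(nat \<Rightarrow> real \<times> 'a option) set set"
  assume K: "\<forall>S\<in>K. S \<subseteq> (\<Union>n. topspace (En_top T n)) \<and> (\<forall>n. openin (En_top T n) (S \<inter> topspace (En_top T n)))"
  then show "\<Union>K \<subseteq> (\<Union>n. topspace (En_top T n))" by blast
  fix n
  have "\<Union>K \<inter> topspace (En_top T n) = \<Union>((\<lambda>S. S \<inter> topspace (En_top T n)) ` K)"
    by blast
  moreover have "openin (En_top T n) (\<Union>((\<lambda>S. S \<inter> topspace (En_top T n)) ` K))"
    using K by (intro openin_Union) blast
  ultimately show "openin (En_top T n) (\<Union>K \<inter> topspace (En_top T n))"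
    by simp
qed

lemma openin_Einf_top:
  "openin (Einf_top T) U \<longleftrightarrow>
     U \<subseteq> (\<Union>n. topspace (En_top T n)) \<and> (\<forall>n. openin (En_top T n) (U \<inter> topspace (En_top T n)))"
  unfolding Einf_top_def by (simp add: topology_inverse'[OF istopology_Einf_top])

lemma topspace_Einf_top: "topspace (Einf_top T) = (\<Union>n. topspace (En_top T n))"
proof
  show "topspace (Einf_top T) \<subseteq> (\<Union>n. topspace (En_top T n))"
    using openin_topspace[of "Einf_top T"] unfolding openin_Einf_top by (rule conjunct1)
  have "openin (Einf_top T) (\<Union>n. topspace (En_top T n))"
    unfolding openin_Einf_top
  proof (intro conjI allI)
    fix n
    have "(\<Union>n. topspace (En_top T n)) \<inter> topspace (En_top T n) = topspace (En_top T n)"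
      by blast
    then show "openin (En_top T n) ((\<Union>n. topspace (En_top T n)) \<inter> topspace (En_top T n))"
      by simp
  qed simp
  then show "(\<Union>n. topspace (En_top T n)) \<subseteq> topspace (Einf_top T)"
    by (rule openin_subset)
qed

lemma openin_Einf_top_Collect:
  assumes "\<And>n. openin (En_top T n) {p \<in> topspace (En_top T n). P p}"
  shows "openin (Einf_top T) {p \<in> topspace (Einf_top T). P p}"
proof -
  have "{p \<in> topspace (Einf_top T). P p} \<inter> topspace (En_top T n) = {p \<in> topspace (En_top T n). P p}" for n
    by (auto simp: topspace_Einf_top)
  with assms show ?thesis
    unfolding openin_Einf_top by (auto simp: topspace_Einf_top)
qed

lemma continuous_map_En_top_Einf_top: "continuous_map (En_top T n) (Einf_top T) (\<lambda>p. p)"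
  unfolding continuous_map_def
proof (intro conjI allI impI)
  show "(\<lambda>p. p) \<in> topspace (En_top T n) \<rightarrow> topspace (Einf_top T)"
    by (auto simp: topspace_Einf_top)
  fix U assume "openin (Einf_top T) U"
  then have "openin (En_top T n) (U \<inter> topspace (En_top T n))"
    by (simp add: openin_Einf_top)
  then show "openin (En_top T n) {p \<in> topspace (En_top T n). p \<in> U}"
    by (simp add: Int_def conj_commute)
qed

lemma quot_top_eq_prod_cone_top_if_Einf_action_continuous:
  assumes tg: "topological_group G T"
    and cont: "continuous_map (prod_topology (Einf_top T) T) (Einf_top T) (\<lambda>(p, g). En_ract G p g)"
  shows "quot_top (prod_topology T (prod_topology T unit_interval)) cone_prod_map = prod_topology T (cone_top T)"
proof -
  have "continuous_map (cone_top T) (Einf_top T) (cone_into_En G 1)"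
    using continuous_map_compose[OF continuous_map_cone_into_En[OF tg order_refl] continuous_map_En_top_Einf_top]
    by (simp add: o_def)
  with cont show ?thesis
    using En_decode_En_ract_cone_into_En[OF tg order_refl]
      openin_Einf_top_Collect[OF openin_En_decode[OF tg]]
    by (rule quot_top_eq_prod_cone_top_if_decodable)
qed

theorem mainTheorem6:
  fixes G :: "('g, 'b) monoid_scheme" and T :: "'g topology"
  assumes "topological_group G T"
    and "Hausdorff_space T"
    and "\<not> continuous_map (prod_topology T (cone_top T)) (cone_top T)
              (\<lambda>(h, (t, a)). (t, map_option (\<lambda>g. h \<otimes>\<^bsub>G\<^esub> g) a))
         \<or> quot_top (prod_topology T (prod_topology T unit_interval)) (\<lambda>(h, g, t). (h, cone_pt g t))
             \<noteq> prod_topology T (cone_top T)"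
  shows "\<not> continuous_map (prod_topology (join_top T) T) (join_top T) (\<lambda>(p, g). join_ract G p g)
       \<and> (\<forall>n\<ge>1. \<not> continuous_map (prod_topology (En_top T n) T) (En_top T n) (\<lambda>(p, g). En_ract G p g))
       \<and> \<not> continuous_map (prod_topology (Einf_top T) T) (Einf_top T) (\<lambda>(p, g). En_ract G p g)"
proof -
  have "quot_top (prod_topology T (prod_topology T unit_interval)) cone_prod_map \<noteq> prod_topology T (cone_top T)"
    using assms(3) continuous_map_cone_action_if_quot_top_eq[OF assms(1)] by blast
  then show ?thesis
    using quot_top_eq_prod_cone_top_if_join_action_continuous[OF assms(1)]
      quot_top_eq_prod_cone_top_if_En_action_continuous[OF assms(1)]
      quot_top_eq_prod_cone_top_if_Einf_action_continuous[OF assms(1)]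
    by blast
qed

end
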